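(* For $p_1,\dots,p_n\in[0,1]$, the tuple $(B_{p_1},\dots,B_{p_n})$ is jointly mixable if and only if $\sum_{i=1}^n p_i$ is an integer.
   Context: Work on an atomless probability space. $B_p$ denotes the Bernoulli distribution with mean $p$. An $n$-tuple of cdfs $\mathbf F=(F_1,\dots,F_n)$ is jointly mixable if the set $\{\text{cdf of }X_1+\dots+X_n:X_i\sim F_i\}$ contains a point mass $\delta_x$ for some $x\in\mathbb{R}$ (equivalently, there exist $X_i\sim F_i$ with $X_1+\dots+X_n$ almost surely constant). *)

theory Defs
  imports "HOL-Probability.Probability"
begin

definition atomless :: "'a measure \<Rightarrow> bool" where
  "atomless M \<longleftrightarrow> (\<forall>A\<in>sets M. 0 < emeasure M A \<longrightarrow>
     (\<exists>B\<in>sets M. B \<subseteq> A \<and> 0 < emeasure M B \<and> emeasure M B < emeasure M A))"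

definition bernoulli_measure :: "real \<Rightarrow> real measure" where
  "bernoulli_measure p = distr (measure_pmf (bernoulli_pmf p)) borel (\<lambda>b. of_bool b)"

definition jointly_mixable :: "'a measure \<Rightarrow> (nat \<Rightarrow> real measure) \<Rightarrow> nat \<Rightarrow> bool" where
  "jointly_mixable M F n \<longleftrightarrow>
     (\<exists>X :: nat \<Rightarrow> 'a \<Rightarrow> real.
        (\<forall>i<n. X i \<in> borel_measurable M \<and> distr M borel (X i) = F i) \<and>
        (\<exists>c. AE \<omega> in M. (\<Sum>i<n. X i \<omega>) = c))"

end

theory Submission
  imports Defs
begin

(* If X_i ~ B_{p_i} have an almost surely constant sum c, then every X_i is {0,1}-valued almost
   surely, so c is an integer, and taking expectations gives c = p_1 + ... + p_n.

   Conversely, an atomless probability space has events of every probability below that of a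
   given event (Sierpinski). Lay out events A_i with prob A_i = p_i one after another around a
   circle of circumference 1, each starting where the previous one ends. At every stage the
   indicator sum equals the number of completed laps, floor (p_1 + ... + p_k), plus the indicator
   of the unfinished lap, an event of probability frac (p_1 + ... + p_k). When the total is an
   integer the unfinished lap is null, so the indicators of the A_i are B_{p_i}-distributed with
   an almost surely constant sum. *)

lemma (in finite_measure) atomless_exists_subset_le_half:
  assumes "atomless M" "B \<in> sets M" "0 < measure M B"
  shows "\<exists>C\<in>sets M. C \<subseteq> B \<and> 0 < measure M C \<and> 2 * measure M C \<le> measure M B"
proof -
  have "\<exists>C\<in>sets M. C \<subseteq> B \<and> 0 < measure M C \<and> measure M C < measure M B"
    using assms unfolding atomless_def by (auto simp: emeasure_eq_measure ennreal_less_iff)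
  then obtain C where C: "C \<in> sets M" "C \<subseteq> B" "0 < measure M C" "measure M C < measure M B"
    by blast
  show ?thesis
  proof (cases "2 * measure M C \<le> measure M B")
    case True
    with C show ?thesis by blast
  next
    case False
    with C assms(2) show ?thesis
      by (intro bexI[of _ "B - C"]) (auto simp: finite_measure_Diff)
  qed
qed

lemma (in finite_measure) atomless_exists_small_subset:
  assumes "atomless M" "A \<in> sets M" "0 < measure M A" "0 < e"
  shows "\<exists>B\<in>sets M. B \<subseteq> A \<and> 0 < measure M B \<and> measure M B \<le> e"
proof -
  have halving: "\<exists>B\<in>sets M. B \<subseteq> A \<and> 0 < measure M B \<and> 2 ^ k * measure M B \<le> measure M A" for k
  proof (induction k)
    case (Suc k)
    then obtain B where B: "B \<in> sets M" "B \<subseteq> A" "0 < measure M B" "2 ^ k * measure M B \<le> measure M A"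
      by blast
    then obtain C where C: "C \<in> sets M" "C \<subseteq> B" "0 < measure M C" "2 * measure M C \<le> measure M B"
      using atomless_exists_subset_le_half[OF assms(1)] by blast
    have "2 ^ Suc k * measure M C = 2 ^ k * (2 * measure M C)"
      by simp
    also have "\<dots> \<le> 2 ^ k * measure M B"
      using C(4) by (intro mult_left_mono) auto
    also have "\<dots> \<le> measure M A"
      by (rule B(4))
    finally have "2 ^ Suc k * measure M C \<le> measure M A" .
    with B C show ?case
      by (intro bexI[of _ C]) auto
  qed (use assms in auto)
  obtain k where "(1 / 2) ^ k < e / measure M A"
    using real_arch_pow_inv[of "e / measure M A" "1 / 2"] assms by auto
  then have "measure M A < 2 ^ k * e"
    using assms(3) by (simp add: field_simps)
  moreover obtain B where B: "B \<in> sets M" "B \<subseteq> A" "0 < measure M B" "2 ^ k * measure M B \<le> measure M A"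
    using halving by blast
  ultimately have "2 ^ k * measure M B < 2 ^ k * e"
    by linarith
  with B show ?thesis
    by (intro bexI[of _ B]) auto
qed

lemma (in finite_measure) exists_subset_half_maximal:
  assumes "0 \<le> r"
  shows "\<exists>C\<in>sets M. C \<subseteq> E \<and> measure M C \<le> r \<and>
    (\<forall>D\<in>sets M. D \<subseteq> E \<longrightarrow> measure M D \<le> r \<longrightarrow> measure M D \<le> 2 * measure M C)"
proof -
  define S where "S = measure M ` {C \<in> sets M. C \<subseteq> E \<and> measure M C \<le> r}"
  have "0 \<in> S"
    using assms unfolding S_def by (auto intro!: image_eqI[of _ _ "{}"])
  moreover have "bdd_above S"
    unfolding S_def by (auto intro: bdd_aboveI[of _ r])
  ultimately have le_Sup: "measure M D \<le> Sup S" if "D \<in> sets M" "D \<subseteq> E" "measure M D \<le> r" for D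
    using that unfolding S_def by (intro cSup_upper) auto
  show ?thesis
  proof (cases "Sup S \<le> 0")
    case True
    have "measure M D \<le> 2 * measure M {}" if "D \<in> sets M" "D \<subseteq> E" "measure M D \<le> r" for D
      using le_Sup[OF that] True by simp
    with assms show ?thesis
      by (intro bexI[of _ "{}"]) auto
  next
    case False
    then have "Sup S / 2 < Sup S"
      by simp
    then obtain x where "x \<in> S" "Sup S / 2 < x"
      using less_cSup_iff[OF _ \<open>bdd_above S\<close>] \<open>0 \<in> S\<close> by blast
    then obtain C where C: "C \<in> sets M" "C \<subseteq> E" "measure M C \<le> r" "Sup S / 2 < measure M C"
      unfolding S_def by blast
    have "measure M D \<le> 2 * measure M C" if "D \<in> sets M" "D \<subseteq> E" "measure M D \<le> r" for D
      using le_Sup[OF that] C(4) by linarith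
    with C show ?thesis
      by (intro bexI[of _ C]) auto
  qed
qed

lemma (in finite_measure) exists_greedy_incseq:
  assumes "0 \<le> a"
  obtains B :: "nat \<Rightarrow> 'a set"
  where "incseq B" "\<And>k. B k \<in> sets M" "\<And>k. B k \<subseteq> A" "\<And>k. measure M (B k) \<le> a"
    "\<And>k D. D \<in> sets M \<Longrightarrow> D \<subseteq> A - B k \<Longrightarrow> measure M D \<le> a - measure M (B k) \<Longrightarrow>
      measure M D \<le> 2 * (measure M (B (Suc k)) - measure M (B k))"
proof -
  obtain pick where pick: "\<And>E r. 0 \<le> r \<Longrightarrow> pick E r \<in> sets M \<and> pick E r \<subseteq> E \<and>
      measure M (pick E r) \<le> r \<and>
      (\<forall>D\<in>sets M. D \<subseteq> E \<longrightarrow> measure M D \<le> r \<longrightarrow> measure M D \<le> 2 * measure M (pick E r))"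
    by atomize_elim (intro choice allI, meson exists_subset_half_maximal)
  define B where "B = rec_nat {} (\<lambda>_ Bk. Bk \<union> pick (A - Bk) (a - measure M Bk))"
  define C where "C k = pick (A - B k) (a - measure M (B k))" for k
  have B_0: "B 0 = {}" and B_Suc: "B (Suc k) = B k \<union> C k" for k
    by (simp_all add: B_def C_def)
  have C_pick: "C k \<in> sets M" "C k \<subseteq> A - B k" "measure M (C k) \<le> a - measure M (B k)"
      "\<forall>D\<in>sets M. D \<subseteq> A - B k \<longrightarrow> measure M D \<le> a - measure M (B k) \<longrightarrow>
        measure M D \<le> 2 * measure M (C k)"
    if "measure M (B k) \<le> a" for k
    using pick[of "a - measure M (B k)" "A - B k"] that unfolding C_def by auto
  have measure_B_Suc: "measure M (B (Suc k)) = measure M (B k) + measure M (C k)"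
    if "B k \<in> sets M" "measure M (B k) \<le> a" for k
    using C_pick[OF that(2)] that(1) unfolding B_Suc by (intro finite_measure_Union) auto
  have B: "B k \<in> sets M \<and> B k \<subseteq> A \<and> measure M (B k) \<le> a" for k
  proof (induction k)
    case 0
    with assms show ?case
      by (simp add: B_0)
  next
    case (Suc k)
    with measure_B_Suc[of k] C_pick(3)[of k] have "measure M (B (Suc k)) \<le> a"
      by linarith
    with Suc C_pick(1,2)[of k] show ?case
      by (auto simp: B_Suc)
  qed
  show thesis
  proof (rule that)
    show "incseq B"
      by (rule incseq_SucI) (simp add: B_Suc)
    fix k D
    assume "D \<in> sets M" "D \<subseteq> A - B k" "measure M D \<le> a - measure M (B k)"
    with B[of k] C_pick(4)[of k] measure_B_Suc[of k]
    show "measure M D \<le> 2 * (measure M (B (Suc k)) - measure M (B k))"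
      by simp
  qed (use B in auto)
qed

(* Sierpinski's theorem. The greedy increments tend to 0, whereas a positive-measure subset of
   A - U that still fits below a would bound all of them from below. *)
lemma (in finite_measure) atomless_exists_subset_measure_eq:
  assumes "atomless M" "A \<in> sets M" "0 \<le> a" "a \<le> measure M A"
  shows "\<exists>B\<in>sets M. B \<subseteq> A \<and> measure M B = a"
proof -
  obtain B where B: "incseq B" "\<And>k. B k \<in> sets M" "\<And>k. B k \<subseteq> A" "\<And>k. measure M (B k) \<le> a"
    and greedy: "\<And>k D. D \<in> sets M \<Longrightarrow> D \<subseteq> A - B k \<Longrightarrow> measure M D \<le> a - measure M (B k) \<Longrightarrow>
      measure M D \<le> 2 * (measure M (B (Suc k)) - measure M (B k))"
    using exists_greedy_incseq[OF assms(3)] by blast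
  define U where "U = (\<Union>k. B k)"
  have U: "U \<in> sets M" "U \<subseteq> A"
    using B unfolding U_def by auto
  have lim: "(\<lambda>k. measure M (B k)) \<longlonglongrightarrow> measure M U"
    unfolding U_def using B by (intro finite_Lim_measure_incseq) auto
  have "measure M U \<le> a"
    using lim B(4) by (intro LIMSEQ_le_const2) auto
  moreover have "\<not> measure M U < a"
  proof
    assume "measure M U < a"
    with U assms have "0 < measure M (A - U)"
      by (simp add: finite_measure_Diff)
    then obtain D where D: "D \<in> sets M" "D \<subseteq> A - U" "0 < measure M D" "measure M D \<le> a - measure M U"
      using atomless_exists_small_subset[OF assms(1), of "A - U" "a - measure M U"] U assms(2)
        \<open>measure M U < a\<close> by auto
    have "measure M D \<le> 2 * (measure M (B (Suc k)) - measure M (B k))" for k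
    proof (rule greedy[OF D(1)])
      show "D \<subseteq> A - B k"
        using D(2) unfolding U_def by auto
      have "measure M (B k) \<le> measure M U"
        using U B(2) unfolding U_def by (intro finite_measure_mono) auto
      with D(4) show "measure M D \<le> a - measure M (B k)"
        by linarith
    qed
    moreover have "(\<lambda>k. 2 * (measure M (B (Suc k)) - measure M (B k)))
        \<longlonglongrightarrow> 2 * (measure M U - measure M U)"
      by (intro tendsto_mult_left tendsto_diff LIMSEQ_Suc lim)
    ultimately have "measure M D \<le> 0"
      by (intro LIMSEQ_le_const) auto
    with D(3) show False
      by simp
  qed
  ultimately show ?thesis
    using U by (intro bexI[of _ U]) auto
qed

lemma AE_bernoulli_measure_01: "AE x in bernoulli_measure p. x \<in> {0, 1}"
  unfolding bernoulli_measure_def by (subst AE_distr_iff) auto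

lemma has_bochner_integral_bernoulli_measure:
  assumes "0 \<le> p" "p \<le> 1"
  shows "has_bochner_integral (bernoulli_measure p) (\<lambda>x. x) p"
  unfolding bernoulli_measure_def
  using assms by (intro has_bochner_integral_distr)
    (auto simp: has_bochner_integral_iff integrable_measure_pmf_finite)

lemma (in prob_space) distr_indicator_eq_bernoulli_measure:
  assumes "A \<in> events"
  shows "distr M borel (indicator A) = bernoulli_measure (prob A)"
proof -
  have "distr M borel (indicator A) = distr (distr M (count_space UNIV) (\<lambda>\<omega>. \<omega> \<in> A)) borel of_bool"
    using assms by (subst distr_distr) (auto simp: comp_def indicator_def[abs_def])
  also have "distr M (count_space UNIV) (\<lambda>\<omega>. \<omega> \<in> A) = measure_pmf (bernoulli_pmf (prob A))"
  proof (rule measure_eqI_countable[where A = UNIV])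
    fix b :: bool
    have "(\<lambda>\<omega>. \<omega> \<in> A) -` {b} \<inter> space M = (if b then A else space M - A)"
      using sets.sets_into_space[OF assms] by auto
    then show "emeasure (distr M (count_space UNIV) (\<lambda>\<omega>. \<omega> \<in> A)) {b} =
        emeasure (measure_pmf (bernoulli_pmf (prob A))) {b}"
      using assms by (simp add: emeasure_distr emeasure_pmf_single emeasure_eq_measure prob_compl)
  qed auto
  finally show ?thesis
    by (simp add: bernoulli_measure_def)
qed

lemma AE_01_if_distr_eq_bernoulli_measure:
  assumes "X \<in> borel_measurable M" "distr M borel X = bernoulli_measure p"
  shows "AE \<omega> in M. X \<omega> \<in> {0, 1}"
proof -
  have "AE x in distr M borel X. x \<in> {0, 1}"
    unfolding assms(2) by (rule AE_bernoulli_measure_01)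
  then show ?thesis
    using assms(1) by (subst (asm) AE_distr_iff) auto
qed

lemma has_bochner_integral_if_distr_eq_bernoulli_measure:
  assumes "X \<in> borel_measurable M" "distr M borel X = bernoulli_measure p" "0 \<le> p" "p \<le> 1"
  shows "has_bochner_integral M X p"
  using has_bochner_integral_bernoulli_measure[OF assms(3,4)] assms(1)
  by (simp flip: assms(2) add: has_bochner_integral_iff integrable_distr_eq integral_distr)

lemma jointly_mixable_bernoulli_imp_sum_Ints:
  assumes "prob_space M" "\<forall>i<n. 0 \<le> p i \<and> p i \<le> 1"
    and "jointly_mixable M (\<lambda>i. bernoulli_measure (p i)) n"
  shows "(\<Sum>i<n. p i) \<in> \<int>"
proof -
  interpret prob_space M by fact
  obtain X c where X: "\<And>i. i < n \<Longrightarrow> X i \<in> borel_measurable M"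
      "\<And>i. i < n \<Longrightarrow> distr M borel (X i) = bernoulli_measure (p i)"
    and c: "AE \<omega> in M. (\<Sum>i<n. X i \<omega>) = c"
    using assms(3) unfolding jointly_mixable_def by blast
  have "has_bochner_integral M (\<lambda>\<omega>. \<Sum>i<n. X i \<omega>) (\<Sum>i<n. p i)"
    using X assms(2)
    by (intro has_bochner_integral_sum has_bochner_integral_if_distr_eq_bernoulli_measure) auto
  then have "has_bochner_integral M (\<lambda>_. c) (\<Sum>i<n. p i)"
    using c X(1) by (subst (asm) has_bochner_integral_cong_AE) auto
  then have c_eq: "c = (\<Sum>i<n. p i)"
    using has_bochner_integral_integral_eq by (fastforce simp: prob_space)
  have "AE \<omega> in M. \<forall>i\<in>{..<n}. X i \<omega> \<in> {0, 1}"
    using X by (intro AE_finite_allI AE_01_if_distr_eq_bernoulli_measure) auto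
  with c have "AE \<omega> in M. c \<in> \<int>"
  proof eventually_elim
    case (elim \<omega>)
    then have "(\<Sum>i<n. X i \<omega>) \<in> \<int>"
      by (intro Ints_sum) force
    with elim show ?case
      by simp
  qed
  then show ?thesis
    using c_eq by simp
qed

(* Think of the events as laid out consecutively on a circle of circumference 1, with R the
   unfinished last lap: A is placed right after R, wrapping around if prob R + y \<ge> 1. *)
lemma (in prob_space) atomless_exists_set_carry:
  assumes "atomless M" "R \<in> events" "prob R < 1" "0 \<le> y" "y \<le> 1"
  shows "\<exists>A R'. A \<in> events \<and> prob A = y \<and> R' \<in> events \<and> prob R' = frac (prob R + y) \<and>
    (\<forall>\<omega>\<in>space M. indicator R \<omega> + indicator A \<omega> = indicator R' \<omega> + (of_int \<lfloor>prob R + y\<rfloor> :: real))"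
proof (cases "prob R + y < 1")
  case True
  then have "y \<le> prob (space M - R)"
    using assms(2) by (simp add: prob_compl)
  then obtain A where A: "A \<in> events" "A \<subseteq> space M - R" "prob A = y"
    using atomless_exists_subset_measure_eq[OF assms(1), of "space M - R" y] assms(2,4) by auto
  have "prob (R \<union> A) = prob R + y"
    using A assms(2) by (subst finite_measure_Union) auto
  moreover have "\<lfloor>prob R + y\<rfloor> = 0" "frac (prob R + y) = prob R + y"
    using True assms(4) by (simp_all add: floor_eq_iff frac_eq)
  moreover have "indicator R \<omega> + indicator A \<omega> = (indicator (R \<union> A) \<omega> :: real)" for \<omega>
    using A(2) by (auto simp: indicator_def)
  ultimately show ?thesis
    using A assms(2) by (intro exI[of _ A] exI[of _ "R \<union> A"]) auto
next
  case False
  obtain S where S: "S \<in> events" "S \<subseteq> R" "prob S = prob R + y - 1"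
    using atomless_exists_subset_measure_eq[OF assms(1,2), of "prob R + y - 1"] False assms(5) by auto
  define A where "A = (space M - R) \<union> S"
  have "prob A = prob (space M - R) + prob S"
    unfolding A_def using S assms(2) by (intro finite_measure_Union) auto
  then have "prob A = y"
    using S(3) assms(2) by (simp add: prob_compl)
  moreover have "\<lfloor>prob R + y\<rfloor> = 1" "frac (prob R + y) = prob R + y - 1"
    using False assms(3,5) by (simp_all add: floor_eq_iff frac_def)
  moreover have "indicator R \<omega> + indicator A \<omega> = (indicator S \<omega> + 1 :: real)" if "\<omega> \<in> space M" for \<omega>
    using S(2) that by (auto simp: A_def indicator_def)
  ultimately show ?thesis
    using S assms(2) by (intro exI[of _ A] exI[of _ S]) (auto simp: A_def)
qed

lemma (in prob_space) atomless_exists_sets_indicator_sum_floor: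
  fixes p :: "nat \<Rightarrow> real" and n :: nat
  assumes "atomless M" "\<forall>i<n. 0 \<le> p i \<and> p i \<le> 1"
  shows "\<exists>A R. (\<forall>i<n. A i \<in> events \<and> prob (A i) = p i) \<and> R \<in> events \<and>
    prob R = frac (\<Sum>i<n. p i) \<and>
    (\<forall>\<omega>\<in>space M. (\<Sum>i<n. indicator (A i) \<omega>) = indicator R \<omega> + (of_int \<lfloor>\<Sum>i<n. p i\<rfloor> :: real))"
  using assms(2)
proof (induction n)
  case 0
  show ?case
    by (intro exI[of _ "\<lambda>_. {}"] exI[of _ "{}"]) auto
next
  case (Suc n)
  define s where "s = (\<Sum>i<n. p i)"
  obtain A R where A: "\<forall>i<n. A i \<in> events \<and> prob (A i) = p i"
    and R: "R \<in> events" "prob R = frac s"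
    and sum_A: "\<forall>\<omega>\<in>space M. (\<Sum>i<n. indicator (A i) \<omega>) = indicator R \<omega> + (of_int \<lfloor>s\<rfloor> :: real)"
    using Suc unfolding s_def by auto
  obtain A' R' where A': "A' \<in> events" "prob A' = p n"
    and R': "R' \<in> events" "prob R' = frac (s + p n)"
    and step: "\<forall>\<omega>\<in>space M.
      indicator R \<omega> + indicator A' \<omega> = indicator R' \<omega> + (of_int \<lfloor>frac s + p n\<rfloor> :: real)"
    using atomless_exists_set_carry[OF assms(1) R(1), of "p n"] R(2) Suc.prems frac_lt_1 by auto
  have s_split: "s + p n = (frac s + p n) + of_int \<lfloor>s\<rfloor>"
    by (simp add: frac_def)
  have floor_sum: "\<lfloor>s + p n\<rfloor> = \<lfloor>frac s + p n\<rfloor> + \<lfloor>s\<rfloor>"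
    by (simp only: s_split floor_add_int[symmetric])
  have sum_indicator:
    "(\<Sum>i<Suc n. indicator ((A(n := A')) i) \<omega>) = indicator R' \<omega> + (of_int \<lfloor>s + p n\<rfloor> :: real)"
    if "\<omega> \<in> space M" for \<omega>
  proof -
    have "(\<Sum>i<n. indicator ((A(n := A')) i) \<omega>) = (\<Sum>i<n. indicator (A i) \<omega> :: real)"
      by (intro sum.cong) auto
    then have "(\<Sum>i<Suc n. indicator ((A(n := A')) i) \<omega>) =
        indicator R \<omega> + indicator A' \<omega> + (of_int \<lfloor>s\<rfloor> :: real)"
      using sum_A that by simp
    also have "\<dots> = indicator R' \<omega> + of_int \<lfloor>s + p n\<rfloor>"
      using step that by (simp add: floor_sum)
    finally show ?thesis .
  qed
  have sum_Suc: "(\<Sum>i<Suc n. p i) = s + p n"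
    by (simp add: s_def)
  show ?case
    unfolding sum_Suc
  proof (intro exI[of _ "A(n := A')"] exI[of _ R'] conjI)
    show "\<forall>i<Suc n. (A(n := A')) i \<in> events \<and> prob ((A(n := A')) i) = p i"
      using A A' by (simp add: less_Suc_eq)
  qed (use R' sum_indicator in auto)
qed

lemma sum_Ints_imp_jointly_mixable_bernoulli:
  assumes "prob_space M" "atomless M" "\<forall>i<n. 0 \<le> p i \<and> p i \<le> 1" "(\<Sum>i<n. p i) \<in> \<int>"
  shows "jointly_mixable M (\<lambda>i. bernoulli_measure (p i)) n"
proof -
  interpret prob_space M by fact
  obtain A R where A: "\<forall>i<n. A i \<in> events \<and> prob (A i) = p i"
    and R: "R \<in> events" "prob R = frac (\<Sum>i<n. p i)"
    and sum_A: "\<forall>\<omega>\<in>space M.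
      (\<Sum>i<n. indicator (A i) \<omega>) = indicator R \<omega> + (of_int \<lfloor>\<Sum>i<n. p i\<rfloor> :: real)"
    using atomless_exists_sets_indicator_sum_floor[OF assms(2,3)] by blast
  have "R \<in> null_sets M"
    using R assms(4) by (simp add: null_sets_def emeasure_eq_measure)
  have "AE \<omega> in M. (\<Sum>i<n. indicator (A i) \<omega>) = (of_int \<lfloor>\<Sum>i<n. p i\<rfloor> :: real)"
    using AE_not_in[OF \<open>R \<in> null_sets M\<close>] AE_space by eventually_elim (simp add: sum_A)
  with A show ?thesis
    unfolding jointly_mixable_def
    by (intro exI[of _ "\<lambda>i. indicator (A i)"]) (auto simp: distr_indicator_eq_bernoulli_measure)
qed

theorem proposition21:
  fixes M :: "'a measure" and p :: "nat \<Rightarrow> real" and n :: nat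
  assumes "prob_space M" and "atomless M"
    and "\<forall>i<n. 0 \<le> p i \<and> p i \<le> 1"
  shows "jointly_mixable M (\<lambda>i. bernoulli_measure (p i)) n \<longleftrightarrow> (\<Sum>i<n. p i) \<in> \<int>"
  using jointly_mixable_bernoulli_imp_sum_Ints[OF assms(1,3)]
    sum_Ints_imp_jointly_mixable_bernoulli[OF assms] by blast

end
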